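(* Let $\rho_{\tau_0}$ be a continuous probability density with positive min $\tau_0$ and let $(\rho_\tau)_{\tau\ge\tau_0}$ be the solution of $$\rho_\tau(x)=\rho_{\tau_0}(x)+\int_{\tau_0}^\tau\rho_s(s)\,\mathcal{Q}(\rho_s)(x-s)\,ds\quad (x>\tau),\qquad \rho_\tau(x)=0\quad(x<\tau).$$ Let $A(\tau)=\int_{\tau_0}^\tau Q_1\rho_s(s)\,ds$ for $\tau\ge\tau_0$. Then $$A(\tau)\le\frac{Q_1}{\log 2}\log\Big(\frac{2\tau}{\tau_0}\Big),\qquad \tau\ge\tau_0.$$ Consequently, for $t_0>0$ and the min history $\ell$ defined by $\log(t/t_0)=A(\ell(t))$ (with $\ell(t_0)=\tau_0$), one has $$\frac{\ell(t)}{\ell(t_0)}\ge\frac12\Big(\frac{t}{t_0}\Big)^{(\log2)/Q_1},\qquad t\ge t_0.$$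
   Context: Fix $p_k\ge0$ ($k\ge1$) with $\sum_kp_k=1$ and $Q_1=\sum_kkp_k<\infty$. For a density $\rho$, $\mathcal{Q}(\rho)=\sum_{k\ge1}p_k\rho^{\star k}$ with $\rho^{\star k}$ the $k$-fold self-convolution. The min of a probability density is the infimum of the support of its distribution. (For a continuous probability density with positive min, the displayed integral equation has a unique solution on $[\tau_0,\infty)$, each $\rho_\tau$ being a continuous probability density with min $\tau$.) The relation $\log(t/t_0)=A(\ell(t))$ defines $\ell(t)$ as (right-continuous) inverse of $\tau\mapsto t_0e^{A(\tau)}$. *)

theory Defs
  imports "HOL-Analysis.Analysis"
begin

definition conv :: "(real \<Rightarrow> real) \<Rightarrow> (real \<Rightarrow> real) \<Rightarrow> real \<Rightarrow> real" where
  "conv f g x = (\<integral>y. f y * g (x - y) \<partial>lborel)"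

(* k-fold self-convolution rho^{*k}, meaningful for k \<ge> 1 *)
fun selfconv :: "(real \<Rightarrow> real) \<Rightarrow> nat \<Rightarrow> real \<Rightarrow> real" where
  "selfconv \<rho> 0 = (\<lambda>_. 0)"
| "selfconv \<rho> (Suc 0) = \<rho>"
| "selfconv \<rho> (Suc (Suc n)) = conv \<rho> (selfconv \<rho> (Suc n))"

definition Qop :: "(nat \<Rightarrow> real) \<Rightarrow> (real \<Rightarrow> real) \<Rightarrow> real \<Rightarrow> real" where
  "Qop p \<rho> x = (\<Sum>k. p (Suc k) * selfconv \<rho> (Suc k) x)"

definition prob_density :: "(real \<Rightarrow> real) \<Rightarrow> bool" where
  "prob_density \<rho> \<longleftrightarrow> (\<forall>x. 0 \<le> \<rho> x) \<and> integrable lborel \<rho> \<and> integral\<^sup>L lborel \<rho> = 1"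

definition density_support :: "(real \<Rightarrow> real) \<Rightarrow> real set" where
  "density_support \<rho> = {x. \<forall>e>0. (LINT y:{x - e<..<x + e}|lborel. \<rho> y) > 0}"

definition density_min :: "(real \<Rightarrow> real) \<Rightarrow> real" where
  "density_min \<rho> = Inf (density_support \<rho>)"

(* continuous probability density with min tau: vanishes on (-inf,tau),
   continuous on [tau,inf) (so its value at tau is the right limit) *)
definition cont_density_min :: "(real \<Rightarrow> real) \<Rightarrow> real \<Rightarrow> bool" where
  "cont_density_min \<rho> \<tau> \<longleftrightarrow> prob_density \<rho> \<and> (\<forall>x<\<tau>. \<rho> x = 0)
     \<and> continuous_on {\<tau>..} \<rho> \<and> density_min \<rho> = \<tau>"

end

theory Submission
  imports Defs
begin

text \<open>
  Since \<open>\<rho>\<^sub>s\<close> vanishes below \<open>s\<close>, so does \<open>\<Q>(\<rho>\<^sub>s)\<close>, and the source term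
  \<open>\<rho>\<^sub>s(s) \<Q>(\<rho>\<^sub>s)(x - s)\<close> is zero as long as \<open>x < 2s\<close>. Hence once the
  min has reached \<open>a\<close>, the density on \<open>[a, 2a)\<close> is frozen: \<open>\<rho>\<^sub>s = \<rho>\<^sub>a\<close> there for
  \<open>a \<le> s\<close>, and by continuity \<open>\<rho>\<^sub>s(s) = \<rho>\<^sub>a(s)\<close> for \<open>s \<in> [a, 2a)\<close>. Thus
  \<open>\<integral>\<^sub>a\<^sup>2\<^sup>a \<rho>\<^sub>s(s) ds \<le> \<integral> \<rho>\<^sub>a = 1\<close>: each doubling of the min costs at most one unit
  of \<open>A/Q\<^sub>1\<close>, which gives \<open>A(\<tau>) \<le> Q\<^sub>1 (log\<^sub>2(\<tau>/\<tau>\<^sub>0) + 1)\<close>. Inverting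
  \<open>log(t/t\<^sub>0) = A(\<ell>(t))\<close> yields the lower bound on \<open>\<ell>\<close>.
\<close>

lemma selfconv_eq_0_below:
  assumes "\<And>x. x < s \<Longrightarrow> f x = 0" and "y < real (Suc n) * s"
  shows "selfconv f (Suc n) y = 0"
  using assms(2)
proof (induction n arbitrary: y)
  case 0
  then show ?case using assms(1) by simp
next
  case (Suc n)
  have "(\<lambda>w. f w * selfconv f (Suc n) (y - w)) = (\<lambda>_. 0)"
  proof
    fix w
    show "f w * selfconv f (Suc n) (y - w) = 0"
      using assms(1)[of w] Suc.IH[of "y - w"] Suc.prems
      by (cases "w < s") (auto simp: algebra_simps)
  qed
  then show ?case by (simp add: conv_def)
qed

lemma Qop_eq_0_below:
  assumes "\<And>x. x < s \<Longrightarrow> f x = 0" and "0 \<le> s" and "y < s"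
  shows "Qop p f y = 0"
proof -
  have "y < real (Suc k) * s" for k
    using assms(2,3) mult_right_mono[of 1 "real (Suc k)" s] by linarith
  then show ?thesis
    using selfconv_eq_0_below[OF assms(1)] by (simp add: Qop_def)
qed

lemma one_le_first_moment:
  fixes p :: "nat \<Rightarrow> real"
  assumes "\<And>k. k \<ge> 1 \<Longrightarrow> p k \<ge> 0" and "(\<lambda>k. p (Suc k)) sums 1"
    and "summable (\<lambda>k. real (Suc k) * p (Suc k))"
  shows "1 \<le> (\<Sum>k. real (Suc k) * p (Suc k))"
proof -
  have "(\<Sum>k. p (Suc k)) \<le> (\<Sum>k. real (Suc k) * p (Suc k))"
  proof (rule suminf_le)
    fix k
    show "p (Suc k) \<le> real (Suc k) * p (Suc k)"
      using assms(1)[of "Suc k"] mult_right_mono[of 1 "real (Suc k)" "p (Suc k)"] by simp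
  qed (use assms(2,3) in \<open>auto simp: sums_iff\<close>)
  then show ?thesis using sums_unique[OF assms(2)] by simp
qed

lemma cont_density_min_integral_le_1:
  assumes "cont_density_min f \<tau>" and "\<tau> \<le> a" and "a \<le> b"
  shows "integral {a..b} f \<le> 1"
proof -
  have pd: "prob_density f" and "continuous_on {\<tau>..} f"
    using assms(1) by (auto simp: cont_density_min_def)
  moreover have "{a..b} \<subseteq> {\<tau>..}"
    using assms(2) by auto
  ultimately have "f integrable_on {a..b}"
    by (metis continuous_on_subset integrable_continuous_interval)
  moreover have "f integrable_on UNIV" and "\<forall>x\<in>UNIV. 0 \<le> f x"
    using pd by (auto simp: prob_density_def integrable_on_lborel)
  ultimately have "integral {a..b} f \<le> integral UNIV f"
    by (intro integral_subset_le) auto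
  also have "integral UNIV f = 1"
    using pd has_integral_integral_lborel[of f] by (simp add: prob_density_def integral_unique)
  finally show ?thesis .
qed

locale min_solution =
  fixes p :: "nat \<Rightarrow> real" and \<rho> :: "real \<Rightarrow> real \<Rightarrow> real" and \<tau>0 :: real
  assumes tau0_pos: "\<tau>0 > 0"
    and sol_reg: "\<And>\<tau>. \<tau> \<ge> \<tau>0 \<Longrightarrow> cont_density_min (\<rho> \<tau>) \<tau>"
    and sol_eq: "\<And>\<tau> x. \<tau> \<ge> \<tau>0 \<Longrightarrow> x > \<tau> \<Longrightarrow>
        ((\<lambda>s. \<rho> s s * Qop p (\<rho> s) (x - s)) has_integral (\<rho> \<tau> x - \<rho> \<tau>0 x)) {\<tau>0..\<tau>}"
    and sol_zero: "\<And>\<tau> x. \<tau> \<ge> \<tau>0 \<Longrightarrow> x < \<tau> \<Longrightarrow> \<rho> \<tau> x = 0"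
    and diag_integrable: "\<And>\<tau>. \<tau> \<ge> \<tau>0 \<Longrightarrow> (\<lambda>s. \<rho> s s) integrable_on {\<tau>0..\<tau>}"
begin

lemma frozen_below_double:
  assumes "\<tau>0 \<le> a" "a \<le> \<tau>" "\<tau> < x" "x < 2 * a"
  shows "\<rho> \<tau> x = \<rho> a x"
proof -
  define g where "g = (\<lambda>s. \<rho> s s * Qop p (\<rho> s) (x - s))"
  have "g s = 0" if "s \<in> {a..\<tau>}" for s
  proof -
    have "Qop p (\<rho> s) (x - s) = 0"
      by (rule Qop_eq_0_below[of s]) (use that assms tau0_pos sol_zero[of s] in auto)
    then show ?thesis by (simp add: g_def)
  qed
  then have tail: "(g has_integral 0) {a..\<tau>}"
    by (metis (mono_tags) has_integral_0 has_integral_cong)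
  have head: "(g has_integral (\<rho> a x - \<rho> \<tau>0 x)) {\<tau>0..a}"
    using sol_eq[of a x] assms unfolding g_def by simp
  have "(g has_integral (\<rho> \<tau> x - \<rho> \<tau>0 x)) {\<tau>0..\<tau>}"
    using sol_eq[of \<tau> x] assms unfolding g_def by simp
  moreover have "(g has_integral (\<rho> a x - \<rho> \<tau>0 x + 0)) {\<tau>0..\<tau>}"
    using has_integral_combine[OF assms(1,2) head tail] .
  ultimately have "\<rho> \<tau> x - \<rho> \<tau>0 x = \<rho> a x - \<rho> \<tau>0 x + 0"
    by (rule has_integral_unique)
  then show ?thesis by simp
qed

lemma diagonal_frozen:
  assumes "\<tau>0 \<le> a" "a < s" "s < 2 * a"
  shows "\<rho> s s = \<rho> a s"
proof -
  have "continuous_on {s..} (\<rho> s)"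
    using sol_reg[of s] assms by (simp add: cont_density_min_def)
  then have "(\<rho> s \<longlongrightarrow> \<rho> s s) (at_right s)"
    by (auto simp: continuous_on_def intro: tendsto_within_subset)
  moreover have "isCont (\<rho> a) s"
    using sol_reg[of a] assms continuous_on_interior[of "{a..}" "\<rho> a" s]
    by (simp add: cont_density_min_def)
  then have "(\<rho> a \<longlongrightarrow> \<rho> a s) (at_right s)"
    by (simp add: isCont_def filterlim_at_split)
  moreover have "eventually (\<lambda>x. \<rho> a x = \<rho> s x) (at_right s)"
    unfolding eventually_at_right[OF assms(3)]
    using assms frozen_below_double[of a s] by auto
  ultimately show ?thesis
    using tendsto_cong tendsto_unique[OF trivial_limit_at_right_real] by metis
qed

lemma diagonal_integral_le_1:
  assumes "\<tau>0 \<le> a" "a \<le> b" "b \<le> 2 * a"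
  shows "integral {a..b} (\<lambda>s. \<rho> s s) \<le> 1"
proof -
  have "integral {a..b} (\<lambda>s. \<rho> s s) = integral {a..b} (\<rho> a)"
    using assms diagonal_frozen[of a]
    by (intro integral_spike[of "{a, b}"]) auto
  also have "\<dots> \<le> 1"
    using sol_reg[of a] assms by (intro cont_density_min_integral_le_1[of "\<rho> a" a]) auto
  finally show ?thesis .
qed

lemma diagonal_integral_le_log:
  assumes "\<tau>0 \<le> \<tau>"
  shows "integral {\<tau>0..\<tau>} (\<lambda>s. \<rho> s s) \<le> log 2 (\<tau> / \<tau>0) + 1"
proof -
  obtain n :: nat where "\<tau> / \<tau>0 < 2 ^ n"
    using real_arch_pow[of 2 "\<tau> / \<tau>0"] by auto
  then have "\<tau> \<le> 2 ^ n * \<tau>0"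
    using tau0_pos by (simp add: field_simps)
  with assms show ?thesis
  proof (induction n arbitrary: \<tau>)
    case 0
    then show ?case using tau0_pos by simp
  next
    case (Suc n)
    have log_nonneg: "0 \<le> log 2 (\<tau> / \<tau>0)"
      using Suc.prems tau0_pos by simp
    show ?case
    proof (cases "\<tau> \<le> 2 * \<tau>0")
      case True
      then show ?thesis
        using diagonal_integral_le_1[of \<tau>0 \<tau>] Suc.prems log_nonneg by simp
    next
      case False
      let ?a = "\<tau> / 2"
      have "integral {\<tau>0..\<tau>} (\<lambda>s. \<rho> s s)
          = integral {\<tau>0..?a} (\<lambda>s. \<rho> s s) + integral {?a..\<tau>} (\<lambda>s. \<rho> s s)"
        using False Suc.prems diag_integrable[of \<tau>] tau0_pos
        by (intro Henstock_Kurzweil_Integration.integral_combine[symmetric]) auto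
      also have "\<dots> \<le> (log 2 (?a / \<tau>0) + 1) + 1"
        using Suc.IH[of ?a] diagonal_integral_le_1[of ?a \<tau>] False Suc.prems tau0_pos
        by (simp add: field_simps)
      also have "log 2 (?a / \<tau>0) = log 2 ((\<tau> / \<tau>0) / 2)"
        by (simp add: mult.commute)
      also have "\<dots> = log 2 (\<tau> / \<tau>0) - 1"
        using Suc.prems tau0_pos by (subst log_divide_pos) auto
      finally show ?thesis by simp
    qed
  qed
qed

end

lemma min_history_lower_bound:
  fixes A :: "real \<Rightarrow> real"
  assumes A_le: "\<And>\<tau>. \<tau> \<ge> \<tau>0 \<Longrightarrow> A \<tau> \<le> Q / ln 2 * ln (2 * \<tau> / \<tau>0)"
    and "Q > 0" "\<tau>0 > 0" "t0 > 0" "t \<ge> t0"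
  shows "ereal (\<tau>0 / 2 * (t / t0) powr (ln 2 / Q))
           \<le> Inf (ereal ` {\<tau>. \<tau> \<ge> \<tau>0 \<and> t0 * exp (A \<tau>) > t})"
proof (rule Inf_greatest, clarify)
  fix \<tau> assume \<tau>: "\<tau> \<ge> \<tau>0" "t0 * exp (A \<tau>) > t"
  have "t > 0" using assms by simp
  have "t / t0 < exp (A \<tau>)"
    using \<tau>(2) \<open>t0 > 0\<close> by (simp add: pos_divide_less_eq mult.commute)
  then have "ln (t / t0) < A \<tau>"
    using ln_strict_mono \<open>t > 0\<close> \<open>t0 > 0\<close> by fastforce
  also have "\<dots> \<le> Q / ln 2 * ln (2 * \<tau> / \<tau>0)"
    using A_le \<tau>(1) .
  finally have "ln ((t / t0) powr (ln 2 / Q)) < ln (2 * \<tau> / \<tau>0)"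
    using \<open>Q > 0\<close> \<open>t > 0\<close> \<open>t0 > 0\<close> by (simp add: ln_powr field_simps)
  then have "(t / t0) powr (ln 2 / Q) < 2 * \<tau> / \<tau>0"
    using \<open>t > 0\<close> \<open>t0 > 0\<close> \<open>\<tau>0 > 0\<close> \<tau>(1) by (subst (asm) ln_less_cancel_iff) auto
  then show "ereal (\<tau>0 / 2 * (t / t0) powr (ln 2 / Q)) \<le> ereal \<tau>"
    using \<open>\<tau>0 > 0\<close> by (simp add: field_simps)
qed

theorem lemma4p2:
  fixes p :: "nat \<Rightarrow> real" and Q1 :: real
    and \<rho> :: "real \<Rightarrow> real \<Rightarrow> real" and \<tau>0 t0 :: real
    and A :: "real \<Rightarrow> real" and ell :: "real \<Rightarrow> ereal"
  assumes p_nonneg: "\<And>k. k \<ge> 1 \<Longrightarrow> p k \<ge> 0"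
    and p_sum: "(\<lambda>k. p (Suc k)) sums 1"
    and Q1_fin: "summable (\<lambda>k. real (Suc k) * p (Suc k))"
    and Q1_def: "Q1 = (\<Sum>k. real (Suc k) * p (Suc k))"
    and tau0_pos: "\<tau>0 > 0"
    and init: "cont_density_min (\<rho> \<tau>0) \<tau>0"
    and sol_reg: "\<And>\<tau>. \<tau> \<ge> \<tau>0 \<Longrightarrow> cont_density_min (\<rho> \<tau>) \<tau>"
    and sol_eq: "\<And>\<tau> x. \<tau> \<ge> \<tau>0 \<Longrightarrow> x > \<tau> \<Longrightarrow>
        ((\<lambda>s. \<rho> s s * Qop p (\<rho> s) (x - s)) has_integral (\<rho> \<tau> x - \<rho> \<tau>0 x)) {\<tau>0..\<tau>}"
    and sol_zero: "\<And>\<tau> x. \<tau> \<ge> \<tau>0 \<Longrightarrow> x < \<tau> \<Longrightarrow> \<rho> \<tau> x = 0"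
    and A_int: "\<And>\<tau>. \<tau> \<ge> \<tau>0 \<Longrightarrow> (\<lambda>s. \<rho> s s) integrable_on {\<tau>0..\<tau>}"
    and A_def: "\<And>\<tau>. A \<tau> = integral {\<tau>0..\<tau>} (\<lambda>s. Q1 * \<rho> s s)"
    and t0_pos: "t0 > 0"
    and ell_def: "\<And>t. ell t = Inf (ereal ` {\<tau>. \<tau> \<ge> \<tau>0 \<and> t0 * exp (A \<tau>) > t})"
  shows "(\<forall>\<tau>\<ge>\<tau>0. A \<tau> \<le> Q1 / ln 2 * ln (2 * \<tau> / \<tau>0))
       \<and> (\<forall>t\<ge>t0. ell t / ereal \<tau>0 \<ge> ereal (1/2 * (t / t0) powr (ln 2 / Q1)))"
proof -
  interpret min_solution p \<rho> \<tau>0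
    using tau0_pos sol_reg sol_eq sol_zero A_int by unfold_locales
  have Q1_ge_1: "Q1 \<ge> 1"
    unfolding Q1_def using p_nonneg p_sum Q1_fin by (rule one_le_first_moment)
  have A_le: "A \<tau> \<le> Q1 / ln 2 * ln (2 * \<tau> / \<tau>0)" if "\<tau> \<ge> \<tau>0" for \<tau>
  proof -
    have "A \<tau> = Q1 * integral {\<tau>0..\<tau>} (\<lambda>s. \<rho> s s)"
      by (simp add: A_def)
    also have "\<dots> \<le> Q1 * (log 2 (\<tau> / \<tau>0) + 1)"
      using diagonal_integral_le_log[OF that] Q1_ge_1 by simp
    also have "log 2 (\<tau> / \<tau>0) + 1 = ln (2 * \<tau> / \<tau>0) / ln 2"
      using that tau0_pos by (simp add: log_def ln_mult ln_div field_simps)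
    finally show ?thesis by simp
  qed
  have "ell t / ereal \<tau>0 \<ge> ereal (1/2 * (t / t0) powr (ln 2 / Q1))" if "t \<ge> t0" for t
  proof -
    have "ereal (\<tau>0 / 2 * (t / t0) powr (ln 2 / Q1)) \<le> ell t"
      unfolding ell_def using A_le Q1_ge_1 tau0_pos t0_pos that
      by (intro min_history_lower_bound) auto
    then have "ereal (\<tau>0 / 2 * (t / t0) powr (ln 2 / Q1)) / ereal \<tau>0 \<le> ell t / ereal \<tau>0"
      by (rule ereal_divide_right_mono) (use tau0_pos in simp)
    moreover have "ereal (\<tau>0 / 2 * (t / t0) powr (ln 2 / Q1)) / ereal \<tau>0
        = ereal (1/2 * (t / t0) powr (ln 2 / Q1))"
      using tau0_pos by simp
    ultimately show ?thesis by simp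
  qed
  with A_le show ?thesis by blast
qed

end
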